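(* Every finite frame $(X,R)$ that is the image of the frame $(\mathbb{R},R_{>1})$ under a surjective p-morphism has small anti-clique overlaps.
   Context: $(\mathbb{R},R_{>1})$ is the frame with $xR_{>1}y$ iff $|x-y|>1$. A p-morphism $f:(Y,S)\to(X,R)$ is a map such that $ySy'$ implies $f(y)Rf(y')$, and whenever $f(y)Rx'$ there is $y'$ with $ySy'$ and $f(y')=x'$. An anti-clique in $(X,R)$ is a subset $\Sigma$ such that $xRy$ holds for no $x,y\in\Sigma$; a maximal anti-clique is one not properly contained in another anti-clique. $(X,R)$ has small anti-clique overlaps if any two distinct maximal anti-cliques have at most one element in common. *)

theory Defs
  imports Complex_Main
begin

definition R_gt1 :: "real \<Rightarrow> real \<Rightarrow> bool" where
  "R_gt1 x y \<longleftrightarrow> \<bar>x - y\<bar> > 1"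

definition p_morphism ::
  "'b set \<Rightarrow> ('b \<Rightarrow> 'b \<Rightarrow> bool) \<Rightarrow> 'a set \<Rightarrow> ('a \<Rightarrow> 'a \<Rightarrow> bool) \<Rightarrow> ('b \<Rightarrow> 'a) \<Rightarrow> bool" where
  "p_morphism Y S X R f \<longleftrightarrow>
     (\<forall>y\<in>Y. f y \<in> X) \<and>
     (\<forall>y\<in>Y. \<forall>y'\<in>Y. S y y' \<longrightarrow> R (f y) (f y')) \<and>
     (\<forall>y\<in>Y. \<forall>x'\<in>X. R (f y) x' \<longrightarrow> (\<exists>y'\<in>Y. S y y' \<and> f y' = x'))"

definition anti_clique :: "'a set \<Rightarrow> ('a \<Rightarrow> 'a \<Rightarrow> bool) \<Rightarrow> 'a set \<Rightarrow> bool" where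
  "anti_clique X R \<Sigma> \<longleftrightarrow> \<Sigma> \<subseteq> X \<and> (\<forall>x\<in>\<Sigma>. \<forall>y\<in>\<Sigma>. \<not> R x y)"

definition max_anti_clique :: "'a set \<Rightarrow> ('a \<Rightarrow> 'a \<Rightarrow> bool) \<Rightarrow> 'a set \<Rightarrow> bool" where
  "max_anti_clique X R \<Sigma> \<longleftrightarrow> anti_clique X R \<Sigma> \<and>
     (\<forall>\<Sigma>'. anti_clique X R \<Sigma>' \<and> \<Sigma> \<subseteq> \<Sigma>' \<longrightarrow> \<Sigma>' = \<Sigma>)"

definition small_anti_clique_overlaps :: "'a set \<Rightarrow> ('a \<Rightarrow> 'a \<Rightarrow> bool) \<Rightarrow> bool" where
  "small_anti_clique_overlaps X R \<longleftrightarrow>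
     (\<forall>\<Sigma>1 \<Sigma>2. max_anti_clique X R \<Sigma>1 \<and> max_anti_clique X R \<Sigma>2 \<and> \<Sigma>1 \<noteq> \<Sigma>2
        \<longrightarrow> card (\<Sigma>1 \<inter> \<Sigma>2) \<le> 1)"

end

theory Submission
  imports Defs
begin

(* Call a set of reals saturated if it is a union of fibres of f. Since f is a p-morphism, whether
   a point s lies within distance 1 of a whole fibre depends only on f s, so the set of points within
   distance 1 of all points of a saturated set is again saturated.
   The preimages A and B of two distinct maximal anti-cliques are saturated sets of diameter at most 1.
   If they share two points, maximality forces the points within distance 1 of all of A and B into both
   sets, and A and B turn out to span saturated windows [a, a + 1] and [b, b + 1] with a < b < a + 1.
   Two such overlapping windows produce a third one, starting at the infimum of a fibre inside (b, b + 1];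
   iterating gives infinitely many saturated windows. But the left end of a saturated window is
   determined by its image under f, and X is finite. *)

definition saturated :: "('b \<Rightarrow> 'a) \<Rightarrow> 'b set \<Rightarrow> bool" where
  "saturated f A \<longleftrightarrow> (\<forall>s\<in>A. \<forall>t. f t = f s \<longrightarrow> t \<in> A)"

definition close_to_all :: "real set \<Rightarrow> real set" where
  "close_to_all A = (\<Inter>p\<in>A. {p - 1..p + 1})"

definition unit_diam :: "real set \<Rightarrow> bool" where
  "unit_diam A \<longleftrightarrow> (\<forall>s\<in>A. \<forall>t\<in>A. \<bar>s - t\<bar> \<le> 1)"

lemma saturated_vimage: "saturated f (f -` S)"
  unfolding saturated_def by simp

lemma saturatedD: "saturated f A \<Longrightarrow> s \<in> A \<Longrightarrow> f t = f s \<Longrightarrow> t \<in> A"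
  unfolding saturated_def by blast

lemma saturated_Un: "saturated f A \<Longrightarrow> saturated f B \<Longrightarrow> saturated f (A \<union> B)"
  unfolding saturated_def by blast

lemma saturated_Diff:
  assumes "saturated f A" and "saturated f B"
  shows "saturated f (B - A)"
  unfolding saturated_def
proof (intro ballI allI impI)
  fix s t assume s: "s \<in> B - A" and "f t = f s"
  then have "t \<in> B"
    using saturatedD[OF assms(2)] by blast
  moreover have "t \<notin> A"
    using saturatedD[OF assms(1) _ \<open>f t = f s\<close>[symmetric]] s by blast
  ultimately show "t \<in> B - A"
    by blast
qed

lemma mem_close_to_all: "s \<in> close_to_all A \<longleftrightarrow> (\<forall>p\<in>A. \<bar>s - p\<bar> \<le> 1)"
  unfolding close_to_all_def by (auto simp: abs_le_iff)

lemma close_to_all_bounds: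
  assumes "s \<in> close_to_all A" and "A \<noteq> {}"
  shows "s \<le> Inf A + 1" and "Sup A - 1 \<le> s"
proof -
  have "s - 1 \<le> Inf A"
    using assms by (intro cInf_greatest) (auto simp: mem_close_to_all abs_le_iff)
  then show "s \<le> Inf A + 1" by simp
  have "Sup A \<le> s + 1"
    using assms by (intro cSup_least) (auto simp: mem_close_to_all abs_le_iff)
  then show "Sup A - 1 \<le> s" by simp
qed

lemma unit_diam_bounds:
  assumes "unit_diam A" and "p \<in> A"
  shows "Inf A \<le> p" "p \<le> Sup A" "p \<le> Inf A + 1" "Sup A - 1 \<le> p"
proof -
  have "p \<in> close_to_all A"
    using assms by (simp add: unit_diam_def mem_close_to_all)
  then show "p \<le> Inf A + 1" "Sup A - 1 \<le> p"
    using close_to_all_bounds assms(2) by blast+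
  have "A \<subseteq> {p - 1..p + 1}"
  proof
    fix r assume "r \<in> A"
    with assms have "\<bar>p - r\<bar> \<le> 1"
      unfolding unit_diam_def by blast
    then show "r \<in> {p - 1..p + 1}"
      by (simp add: abs_le_iff)
  qed
  then have "bdd_below A" "bdd_above A"
    by (rule bdd_below_mono[OF bdd_below_Icc], rule bdd_above_mono[OF bdd_above_Icc])
  then show "Inf A \<le> p" "p \<le> Sup A"
    using assms(2) by (simp_all add: cInf_lower cSup_upper)
qed

lemma unit_diam_Un:
  assumes "unit_diam A" "unit_diam B" "B \<subseteq> close_to_all A"
  shows "unit_diam (A \<union> B)"
proof -
  have cross: "\<bar>s - t\<bar> \<le> 1" "\<bar>t - s\<bar> \<le> 1" if "s \<in> A" "t \<in> B" for s t
    using assms(3) that by (auto simp: mem_close_to_all abs_minus_commute)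
  show ?thesis
    unfolding unit_diam_def
  proof (intro ballI)
    fix s t assume "s \<in> A \<union> B" "t \<in> A \<union> B"
    then show "\<bar>s - t\<bar> \<le> 1"
      using assms(1,2) cross unfolding unit_diam_def by blast
  qed
qed

lemma unit_diam_Un_apart:
  assumes "unit_diam A" "unit_diam B" "\<not> unit_diam (A \<union> B)"
  shows "\<exists>y y'. (y \<in> A \<and> y' \<in> B \<or> y \<in> B \<and> y' \<in> A) \<and> y + 1 < y'"
proof -
  obtain s t where st: "s \<in> A \<union> B" "t \<in> A \<union> B" "\<not> \<bar>s - t\<bar> \<le> 1"
    using assms(3) unfolding unit_diam_def by blast
  have "\<not> (s \<in> A \<and> t \<in> A)" "\<not> (s \<in> B \<and> t \<in> B)"
    using assms(1,2) st(3) unfolding unit_diam_def by blast+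
  with st(1,2) have "s \<in> A \<and> t \<in> B \<or> s \<in> B \<and> t \<in> A"
    by blast
  moreover have "s + 1 < t \<or> t + 1 < s"
    using st(3) by (auto simp: abs_if split: if_splits)
  ultimately show ?thesis
    by blast
qed

lemma close_to_all_eq_window:
  assumes "A \<noteq> {}" "A \<subseteq> {a..a + 1}" "Inf A = a" "Sup A = a + 1"
  shows "close_to_all A = {a..a + 1}"
proof
  show "close_to_all A \<subseteq> {a..a + 1}"
  proof
    fix s assume "s \<in> close_to_all A"
    then show "s \<in> {a..a + 1}"
      using close_to_all_bounds[of s A] assms(1,3,4) by simp
  qed
  show "{a..a + 1} \<subseteq> close_to_all A"
  proof
    fix s assume s: "s \<in> {a..a + 1}"
    have "\<bar>s - p\<bar> \<le> 1" if "p \<in> A" for p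
      using s that assms(2) by (auto simp: abs_le_iff)
    then show "s \<in> close_to_all A"
      by (simp add: mem_close_to_all)
  qed
qed

lemma saturated_window_unique:
  fixes f :: "real \<Rightarrow> 'a"
  assumes "saturated f {a..a + 1}" and "saturated f {b..b + 1}" and "f a = f b"
  shows "a = b"
proof -
  have "b \<in> {a..a + 1}"
    by (rule saturatedD[OF assms(1) _ assms(3)[symmetric]]) simp
  moreover have "a \<in> {b..b + 1}"
    by (rule saturatedD[OF assms(2) _ assms(3)]) simp
  ultimately show ?thesis
    by simp
qed

lemma finite_saturated_windows:
  fixes f :: "real \<Rightarrow> 'a"
  assumes "finite (range f)"
  shows "finite {a. saturated f {a..a + 1}}"
proof (rule inj_on_finite[OF _ _ assms])
  show "inj_on f {a. saturated f {a..a + 1}}"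
    by (rule inj_onI) (simp add: saturated_window_unique)
qed blast

lemma close_to_all_Un_endpoints:
  assumes diam: "unit_diam A" "unit_diam B" and p: "p \<in> A" "p \<in> B"
    and apart: "y \<in> A" "y' \<in> B" "y + 1 < y'"
  shows "Inf A + 1 \<in> close_to_all (A \<union> B)" "Sup B - 1 \<in> close_to_all (A \<union> B)"
proof -
  note A = unit_diam_bounds[OF diam(1)] and B = unit_diam_bounds[OF diam(2)]
  have gap: "Inf A + 1 < Sup B"
    using A(1)[OF apart(1)] B(2)[OF apart(2)] apart(3) by simp
  have near_p: "\<bar>r - p\<bar> \<le> 1" if "r \<in> A \<union> B" for r
    using that p diam unfolding unit_diam_def by blast
  have "\<bar>Inf A + 1 - r\<bar> \<le> 1 \<and> \<bar>Sup B - 1 - r\<bar> \<le> 1" if "r \<in> A \<union> B" for r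
  proof (cases "r \<in> A")
    case True
    then show ?thesis
      using A(1,3)[OF True] B(4)[OF p(2)] near_p[OF that] gap by (simp add: abs_le_iff)
  next
    case False
    then have "r \<in> B"
      using that by blast
    then show ?thesis
      using B(2,4)[OF \<open>r \<in> B\<close>] A(3)[OF p(1)] near_p[OF that] gap by (simp add: abs_le_iff)
  qed
  then show "Inf A + 1 \<in> close_to_all (A \<union> B)" "Sup B - 1 \<in> close_to_all (A \<union> B)"
    by (simp_all add: mem_close_to_all)
qed

(* s is within distance 1 of the whole fibre of f t exactly when R (f s) (f t) fails, so for a
   p-morphism the set of such s is a union of fibres. *)
locale R_gt1_pmorphism =
  fixes f :: "real \<Rightarrow> 'a"
  assumes saturated_close_to_all_fibre: "saturated f (close_to_all (f -` {w}))"
begin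

lemma saturated_close_to_all:
  assumes "saturated f A"
  shows "saturated f (close_to_all A)"
  unfolding saturated_def
proof (intro ballI allI impI)
  fix s t assume s: "s \<in> close_to_all A" and "f t = f s"
  show "t \<in> close_to_all A"
    unfolding mem_close_to_all
  proof
    fix p assume "p \<in> A"
    then have "f -` {f p} \<subseteq> A"
      using saturatedD[OF assms] by blast
    then have "s \<in> close_to_all (f -` {f p})"
      using s by (auto simp: mem_close_to_all)
    from saturatedD[OF saturated_close_to_all_fibre this \<open>f t = f s\<close>]
    show "\<bar>t - p\<bar> \<le> 1"
      by (simp add: mem_close_to_all)
  qed
qed

lemma saturated_window_if_spans:
  assumes "saturated f S" "S \<noteq> {}" "S \<subseteq> {a..a + 1}" "Inf S = a" "Sup S = a + 1"
  shows "saturated f {a..a + 1}"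
  using saturated_close_to_all[OF assms(1)] close_to_all_eq_window[OF assms(2-5)] by simp

lemma saturated_window_Inf:
  assumes "saturated f A" "unit_diam A" "Inf A + 1 \<in> A"
  shows "saturated f {Inf A..Inf A + 1}"
proof (rule saturated_window_if_spans[OF assms(1)])
  show "A \<noteq> {}"
    using assms(3) by blast
  show "A \<subseteq> {Inf A..Inf A + 1}"
    using unit_diam_bounds(1,3)[OF assms(2)] by (simp add: subset_iff)
  show "Sup A = Inf A + 1"
    using cSup_eq_maximum[OF assms(3) unit_diam_bounds(3)[OF assms(2)]] .
qed simp

lemma saturated_window_Sup:
  assumes "saturated f A" "unit_diam A" "Sup A - 1 \<in> A"
  shows "saturated f {Sup A - 1..Sup A - 1 + 1}"
proof (rule saturated_window_if_spans[OF assms(1)])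
  show "A \<noteq> {}"
    using assms(3) by blast
  show "A \<subseteq> {Sup A - 1..Sup A - 1 + 1}"
    using unit_diam_bounds(2,4)[OF assms(2)] by (simp add: subset_iff)
  show "Inf A = Sup A - 1"
    using cInf_eq_minimum[OF assms(3) unit_diam_bounds(4)[OF assms(2)]] .
qed simp

lemma fibre_Inf_plus_one_subset:
  assumes Wa: "saturated f {a..a + 1}" and Wb: "saturated f {b..b + 1}" and "a < b" "b < a + 1"
    and P: "saturated f P" "y \<in> P" "P \<subseteq> {a + 1<..b + 1}"
  shows "f -` {f (Inf P + 1)} \<subseteq> {Inf P..Inf P + 1}"
proof
  have P_bounds: "a + 1 < p" "p \<le> b + 1" "Inf P \<le> p" if "p \<in> P" for p
    using subsetD[OF P(3) that] cInf_lower[OF that bdd_below_mono[OF bdd_below_Ioc P(3)]] by simp_all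
  have "a + 1 \<le> Inf P"
    using P(2) P_bounds(1) by (intro cInf_greatest) (auto intro: less_imp_le)
  have "Inf P + 1 \<in> close_to_all P"
    unfolding mem_close_to_all
  proof
    fix p assume "p \<in> P"
    then show "\<bar>Inf P + 1 - p\<bar> \<le> 1"
      using P_bounds(2,3)[OF \<open>p \<in> P\<close>] \<open>a + 1 \<le> Inf P\<close> assms(4) by (simp add: abs_le_iff)
  qed
  fix r assume "r \<in> f -` {f (Inf P + 1)}"
  then have fr: "f r = f (Inf P + 1)"
    by simp
  have r: "r \<in> close_to_all P"
    using saturatedD[OF saturated_close_to_all[OF P(1)] \<open>Inf P + 1 \<in> close_to_all P\<close> fr] .
  (* Inf P + 1 lies beyond both windows, so its fibre avoids them. *)
  have "r \<notin> {a..a + 1}"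
    using saturatedD[OF Wa _ fr[symmetric]] \<open>a + 1 \<le> Inf P\<close> by auto
  moreover have "r \<notin> {b..b + 1}"
    using saturatedD[OF Wb _ fr[symmetric]] \<open>a + 1 \<le> Inf P\<close> assms(4) by auto
  moreover have "\<bar>r - y\<bar> \<le> 1"
    using r P(2) unfolding mem_close_to_all by blast
  then have "y - 1 \<le> r"
    by (simp add: abs_le_iff)
  ultimately have "Inf P \<le> r"
    using P_bounds(1,2,3)[OF P(2)] assms(3,4) by auto
  moreover have "r \<le> Inf P + 1"
    using close_to_all_bounds(1)[OF r] P(2) by blast
  ultimately show "r \<in> {Inf P..Inf P + 1}"
    by simp
qed

lemma saturated_window_at_Inf:
  assumes Wa: "saturated f {a..a + 1}" and Wb: "saturated f {b..b + 1}" and "a < b" "b < a + 1"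
    and P: "saturated f P" "y \<in> P" "P \<subseteq> {a + 1<..b + 1}"
  shows "saturated f {Inf P..Inf P + 1}"
proof -
  define S where "S = P \<union> f -` {f (Inf P + 1)}"
  have "bdd_below P"
    by (rule bdd_below_mono[OF bdd_below_Ioc P(3)])
  have "a + 1 \<le> Inf P"
    using P(2) P(3) by (intro cInf_greatest) auto
  have "P \<subseteq> {Inf P..Inf P + 1}"
    using P(3) cInf_lower[OF _ \<open>bdd_below P\<close>] \<open>a + 1 \<le> Inf P\<close> assms(4) by fastforce
  then have "S \<subseteq> {Inf P..Inf P + 1}"
    using fibre_Inf_plus_one_subset[OF assms] by (simp add: S_def)
  have "Inf P \<le> Inf S"
    using \<open>S \<subseteq> {Inf P..Inf P + 1}\<close> by (intro cInf_greatest) (auto simp: S_def)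
  moreover have "Inf S \<le> Inf P"
    using cInf_superset_mono[OF _ bdd_below_mono[OF bdd_below_Icc \<open>S \<subseteq> {Inf P..Inf P + 1}\<close>], of P]
      P(2) by (auto simp: S_def)
  moreover have "Sup S = Inf P + 1"
    using \<open>S \<subseteq> {Inf P..Inf P + 1}\<close> by (intro cSup_eq_maximum) (auto simp: S_def)
  moreover have "saturated f S"
    unfolding S_def by (intro saturated_Un P(1) saturated_vimage)
  ultimately show ?thesis
    using saturated_window_if_spans[of S] \<open>S \<subseteq> {Inf P..Inf P + 1}\<close> P(2) by (auto simp: S_def)
qed

lemma saturated_window_step:
  assumes Wa: "saturated f {a..a + 1}" and Wb: "saturated f {b..b + 1}" and "a < b" "b < a + 1"
  obtains c where "saturated f {c..c + 1}" "b < c" "c < b + 1"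
proof -
  define y where "y = (a + b) / 2 + 1"
  define P where "P = f -` {f y}"
  have y: "y \<in> {b..b + 1} - {a..a + 1}" "y < b + 1"
    using assms(3,4) by (auto simp: y_def field_simps)
  have "P \<subseteq> {b..b + 1} - {a..a + 1}"
    using saturatedD[OF saturated_Diff[OF Wa Wb] y(1)] by (auto simp: P_def)
  then have "P \<subseteq> {a + 1<..b + 1}"
    using assms(3) by auto
  moreover have "y \<in> P" "saturated f P"
    by (simp_all add: P_def saturated_vimage)
  ultimately have "saturated f {Inf P..Inf P + 1}"
    using saturated_window_at_Inf[OF assms] by blast
  moreover have "a + 1 \<le> Inf P"
    using \<open>y \<in> P\<close> \<open>P \<subseteq> {a + 1<..b + 1}\<close> by (intro cInf_greatest) auto
  moreover have "Inf P \<le> y"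
    using cInf_lower[OF \<open>y \<in> P\<close> bdd_below_mono[OF bdd_below_Ioc \<open>P \<subseteq> {a + 1<..b + 1}\<close>]] .
  ultimately show ?thesis
    using that y(2) assms(4) by simp
qed

lemma no_overlapping_saturated_windows:
  assumes "finite (range f)"
    and "saturated f {a..a + 1}" "saturated f {b..b + 1}" "a < b" "b < a + 1"
  shows False
proof -
  define Q where
    "Q = {b. saturated f {b..b + 1} \<and> (\<exists>a. saturated f {a..a + 1} \<and> a < b \<and> b < a + 1)}"
  have Q_iff: "c \<in> Q \<longleftrightarrow> saturated f {c..c + 1} \<and> (\<exists>a. saturated f {a..a + 1} \<and> a < c \<and> c < a + 1)"
    for c
    by (simp add: Q_def)
  have "finite Q"
    using finite_saturated_windows[OF assms(1)] by (rule rev_finite_subset) (auto simp: Q_iff)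
  moreover have "b \<in> Q"
    using assms(2-5) Q_iff by blast
  ultimately have "Max Q \<in> Q" and Max_ge: "\<And>c. c \<in> Q \<Longrightarrow> c \<le> Max Q"
    by (auto intro: Max_in)
  then obtain a' where "saturated f {a'..a' + 1}" "saturated f {Max Q..Max Q + 1}"
    "a' < Max Q" "Max Q < a' + 1"
    using Q_iff by blast
  then obtain c where "saturated f {c..c + 1}" "Max Q < c" "c < Max Q + 1"
    by (rule saturated_window_step)
  then have "c \<in> Q"
    using \<open>saturated f {Max Q..Max Q + 1}\<close> Q_iff by blast
  then show False
    using Max_ge \<open>Max Q < c\<close> by fastforce
qed

lemma close_to_all_Un_subset_Int:
  assumes sat: "saturated f A" "saturated f B" and diam: "unit_diam A" "unit_diam B"
    and maximal: "\<And>F. saturated f F \<Longrightarrow> unit_diam (A \<union> F) \<Longrightarrow> F \<subseteq> A"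
      "\<And>F. saturated f F \<Longrightarrow> unit_diam (B \<union> F) \<Longrightarrow> F \<subseteq> B"
    and apart: "y \<in> A" "y' \<in> B" "y + 1 < y'"
  shows "close_to_all (A \<union> B) \<subseteq> A \<inter> B"
proof -
  define I where "I = close_to_all (A \<union> B)"
  have I_eq: "I = close_to_all A \<inter> close_to_all B"
    by (auto simp: I_def mem_close_to_all)
  have "Inf A + 1 < Sup B"
    using unit_diam_bounds(1)[OF diam(1) apart(1)] unit_diam_bounds(2)[OF diam(2) apart(2)] apart(3)
    by simp
  moreover have I_bounds: "s \<in> {Sup B - 1..Inf A + 1}" if "s \<in> I" for s
    using close_to_all_bounds(1)[of s A] close_to_all_bounds(2)[of s B] that I_eq apart(1,2)
    by auto
  ultimately have "unit_diam I"
    unfolding unit_diam_def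
  proof (intro ballI)
    fix s t assume "s \<in> I" "t \<in> I"
    then show "\<bar>s - t\<bar> \<le> 1"
      using I_bounds[of s] I_bounds[of t] \<open>Inf A + 1 < Sup B\<close> by (simp add: abs_le_iff)
  qed
  moreover have "saturated f I"
    unfolding I_def by (intro saturated_close_to_all saturated_Un sat)
  moreover have "I \<subseteq> close_to_all A" "I \<subseteq> close_to_all B"
    using I_eq by simp_all
  ultimately have "I \<subseteq> A" "I \<subseteq> B"
    using maximal(1)[OF _ unit_diam_Un[OF diam(1)]] maximal(2)[OF _ unit_diam_Un[OF diam(2)]]
    by blast+
  then show ?thesis
    by (simp add: I_def)
qed

lemma overlapping_saturated_windows:
  assumes sat: "saturated f A" "saturated f B" and diam: "unit_diam A" "unit_diam B"
    and maximal: "\<And>F. saturated f F \<Longrightarrow> unit_diam (A \<union> F) \<Longrightarrow> F \<subseteq> A"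
      "\<And>F. saturated f F \<Longrightarrow> unit_diam (B \<union> F) \<Longrightarrow> F \<subseteq> B"
    and common: "p \<in> A \<inter> B" "q \<in> A \<inter> B" "p \<noteq> q"
    and apart: "y \<in> A" "y' \<in> B" "y + 1 < y'"
  obtains a b where "saturated f {a..a + 1}" "saturated f {b..b + 1}" "a < b" "b < a + 1"
proof -
  note A = unit_diam_bounds[OF diam(1)] and B = unit_diam_bounds[OF diam(2)]
  have "Inf A + 1 \<in> A" "Sup B - 1 \<in> B"
    using close_to_all_Un_endpoints[OF diam _ _ apart] close_to_all_Un_subset_Int[OF assms(1-6) apart]
      common(1) by blast+
  then have "saturated f {Inf A..Inf A + 1}" "saturated f {Sup B - 1..Sup B - 1 + 1}"
    using saturated_window_Inf[OF sat(1) diam(1)] saturated_window_Sup[OF sat(2) diam(2)] by simp_all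
  moreover have "Inf A < Sup B - 1"
    using A(1)[OF apart(1)] B(2)[OF apart(2)] apart(3) by simp
  moreover have "Sup B - 1 < Inf A + 1"
  proof (rule ccontr)
    assume "\<not> Sup B - 1 < Inf A + 1"
    then have "p = q"
      using A(3)[OF IntD1[OF common(1)]] A(3)[OF IntD1[OF common(2)]]
        B(4)[OF IntD2[OF common(1)]] B(4)[OF IntD2[OF common(2)]] by linarith
    with common(3) show False
      by simp
  qed
  ultimately show ?thesis
    using that by blast
qed

lemma overlapping_saturated_windows_if_not_unit_diam:
  assumes sat: "saturated f A" "saturated f B" and diam: "unit_diam A" "unit_diam B"
    and maximal: "\<And>F. saturated f F \<Longrightarrow> unit_diam (A \<union> F) \<Longrightarrow> F \<subseteq> A"
      "\<And>F. saturated f F \<Longrightarrow> unit_diam (B \<union> F) \<Longrightarrow> F \<subseteq> B"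
    and common: "p \<in> A \<inter> B" "q \<in> A \<inter> B" "p \<noteq> q"
    and "\<not> unit_diam (A \<union> B)"
  obtains a b where "saturated f {a..a + 1}" "saturated f {b..b + 1}" "a < b" "b < a + 1"
proof -
  obtain y y' where "y \<in> A \<and> y' \<in> B \<or> y \<in> B \<and> y' \<in> A" "y + 1 < y'"
    using unit_diam_Un_apart[OF diam \<open>\<not> unit_diam (A \<union> B)\<close>] by blast
  then show ?thesis
  proof (elim disjE conjE)
    assume "y \<in> A" "y' \<in> B"
    then show ?thesis
      using overlapping_saturated_windows[OF assms(1-9)] \<open>y + 1 < y'\<close> that by blast
  next
    assume "y \<in> B" "y' \<in> A"
    moreover have "p \<in> B \<inter> A" "q \<in> B \<inter> A"
      using common by auto
    ultimately show ?thesis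
      using overlapping_saturated_windows[OF sat(2,1) diam(2,1) maximal(2,1)] common(3) \<open>y + 1 < y'\<close> that
      by blast
  qed
qed

end

lemma p_morphism_R_gt1_iff:
  assumes "p_morphism UNIV R_gt1 X R f"
  shows "R (f s) (f t) \<longleftrightarrow> (\<exists>t'. f t' = f t \<and> 1 < \<bar>s - t'\<bar>)"
proof
  assume "R (f s) (f t)"
  moreover have "f t \<in> X"
    using assms by (simp add: p_morphism_def)
  ultimately obtain t' where "R_gt1 s t'" "f t' = f t"
    using assms unfolding p_morphism_def by blast
  then show "\<exists>t'. f t' = f t \<and> 1 < \<bar>s - t'\<bar>"
    by (auto simp: R_gt1_def)
next
  assume "\<exists>t'. f t' = f t \<and> 1 < \<bar>s - t'\<bar>"
  then obtain t' where "f t' = f t" "R_gt1 s t'"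
    by (auto simp: R_gt1_def)
  then show "R (f s) (f t)"
    using assms unfolding p_morphism_def by (metis UNIV_I)
qed

lemma R_gt1_pmorphism_if_p_morphism:
  assumes "p_morphism UNIV R_gt1 X R f"
  shows "R_gt1_pmorphism f"
proof
  fix w
  have near_iff: "s \<in> close_to_all (f -` {w}) \<longleftrightarrow> (\<forall>u. f u = w \<longrightarrow> \<not> R (f s) (f u))" for s
  proof
    assume near: "s \<in> close_to_all (f -` {w})"
    show "\<forall>u. f u = w \<longrightarrow> \<not> R (f s) (f u)"
    proof (intro allI impI notI)
      fix u assume "f u = w" "R (f s) (f u)"
      then obtain t' where "f t' = w" "1 < \<bar>s - t'\<bar>"
        using p_morphism_R_gt1_iff[OF assms] by auto
      moreover have "\<bar>s - t'\<bar> \<le> 1"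
        using near \<open>f t' = w\<close> by (simp add: mem_close_to_all)
      ultimately show False
        by simp
    qed
  next
    assume no_R: "\<forall>u. f u = w \<longrightarrow> \<not> R (f s) (f u)"
    show "s \<in> close_to_all (f -` {w})"
      unfolding mem_close_to_all
    proof
      fix p assume "p \<in> f -` {w}"
      then have "\<not> R (f s) (f p)"
        using no_R by blast
      then show "\<bar>s - p\<bar> \<le> 1"
        by (auto simp: p_morphism_R_gt1_iff[OF assms] not_less)
    qed
  qed
  show "saturated f (close_to_all (f -` {w}))"
    unfolding saturated_def
  proof (intro ballI allI impI)
    fix s t assume "s \<in> close_to_all (f -` {w})" "f t = f s"
    then show "t \<in> close_to_all (f -` {w})"
      using near_iff[of s] near_iff[of t] by simp
  qed
qed

lemma anti_clique_iff_unit_diam_vimage: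
  assumes "p_morphism UNIV R_gt1 X R f" and "range f = X"
  shows "anti_clique X R \<Sigma> \<longleftrightarrow> \<Sigma> \<subseteq> X \<and> unit_diam (f -` \<Sigma>)"
proof
  assume anti: "anti_clique X R \<Sigma>"
  have "\<bar>s - t\<bar> \<le> 1" if "s \<in> f -` \<Sigma>" "t \<in> f -` \<Sigma>" for s t
  proof -
    have "\<not> R (f s) (f t)"
      using anti that by (auto simp: anti_clique_def)
    then show ?thesis
      using p_morphism_R_gt1_iff[OF assms(1), of s t] by force
  qed
  with anti show "\<Sigma> \<subseteq> X \<and> unit_diam (f -` \<Sigma>)"
    by (simp add: anti_clique_def unit_diam_def)
next
  assume h: "\<Sigma> \<subseteq> X \<and> unit_diam (f -` \<Sigma>)"
  have no_R: "\<not> R (f s) (f t)" if "f s \<in> \<Sigma>" "f t \<in> \<Sigma>" for s t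
    using h that unfolding unit_diam_def p_morphism_R_gt1_iff[OF assms(1)] by (auto simp: not_less)
  show "anti_clique X R \<Sigma>"
    unfolding anti_clique_def
  proof (intro conjI ballI)
    show "\<Sigma> \<subseteq> X"
      using h by simp
    fix x y assume xy: "x \<in> \<Sigma>" "y \<in> \<Sigma>"
    moreover have "\<Sigma> \<subseteq> range f"
      using h assms(2) by simp
    ultimately obtain s t where "x = f s" "y = f t"
      by blast
    then show "\<not> R x y"
      using xy no_R by simp
  qed
qed

lemma max_anti_clique_vimage_maximal:
  assumes "p_morphism UNIV R_gt1 X R f" and "range f = X" and "max_anti_clique X R \<Sigma>"
    and "saturated f F" and "unit_diam (f -` \<Sigma> \<union> F)"
  shows "F \<subseteq> f -` \<Sigma>"
proof -
  have "f -` (\<Sigma> \<union> f ` F) = f -` \<Sigma> \<union> F"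
    using \<open>saturated f F\<close> by (auto simp: saturated_def)
  moreover have "\<Sigma> \<union> f ` F \<subseteq> X"
    using assms(2,3) by (auto simp: max_anti_clique_def anti_clique_def)
  ultimately have "anti_clique X R (\<Sigma> \<union> f ` F)"
    using assms(5) by (simp add: anti_clique_iff_unit_diam_vimage[OF assms(1,2)])
  then have "\<Sigma> \<union> f ` F = \<Sigma>"
    using assms(3) unfolding max_anti_clique_def by blast
  then show ?thesis
    by auto
qed

lemma max_anti_cliques_saturated_windows:
  assumes pm: "p_morphism UNIV R_gt1 X R f" and surj: "range f = X"
    and max: "max_anti_clique X R \<Sigma>1" "max_anti_clique X R \<Sigma>2" and "\<Sigma>1 \<noteq> \<Sigma>2"
    and common: "x \<in> \<Sigma>1 \<inter> \<Sigma>2" "z \<in> \<Sigma>1 \<inter> \<Sigma>2" "x \<noteq> z"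
  obtains a b where "saturated f {a..a + 1}" "saturated f {b..b + 1}" "a < b" "b < a + 1"
proof -
  interpret R_gt1_pmorphism f
    using R_gt1_pmorphism_if_p_morphism[OF pm] .
  define A B where "A = f -` \<Sigma>1" and "B = f -` \<Sigma>2"
  have "\<Sigma>1 \<subseteq> X" "\<Sigma>2 \<subseteq> X"
    using max by (auto simp: max_anti_clique_def anti_clique_def)
  have diam: "unit_diam A" "unit_diam B"
    using max anti_clique_iff_unit_diam_vimage[OF pm surj]
    by (auto simp: A_def B_def max_anti_clique_def)
  note maximal = max_anti_clique_vimage_maximal[OF pm surj max(1), folded A_def]
    max_anti_clique_vimage_maximal[OF pm surj max(2), folded B_def]
  have "\<Sigma>1 \<subseteq> range f"
    using \<open>\<Sigma>1 \<subseteq> X\<close> surj by simp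
  then obtain p q where "f p = x" "f q = z"
    using common by blast
  then have pq: "p \<in> A \<inter> B" "q \<in> A \<inter> B" "p \<noteq> q"
    using common by (auto simp: A_def B_def)
  have "\<not> anti_clique X R (\<Sigma>1 \<union> \<Sigma>2)"
  proof
    assume "anti_clique X R (\<Sigma>1 \<union> \<Sigma>2)"
    then have "\<Sigma>1 \<union> \<Sigma>2 = \<Sigma>1" "\<Sigma>1 \<union> \<Sigma>2 = \<Sigma>2"
      using max unfolding max_anti_clique_def by blast+
    with \<open>\<Sigma>1 \<noteq> \<Sigma>2\<close> show False
      by simp
  qed
  then have "\<not> unit_diam (A \<union> B)"
    using \<open>\<Sigma>1 \<subseteq> X\<close> \<open>\<Sigma>2 \<subseteq> X\<close>
    by (simp add: anti_clique_iff_unit_diam_vimage[OF pm surj] A_def B_def vimage_Un)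
  moreover have "saturated f A" "saturated f B"
    by (simp_all add: A_def B_def saturated_vimage)
  ultimately show ?thesis
    using overlapping_saturated_windows_if_not_unit_diam[OF _ _ diam maximal pq] that by blast
qed

theorem lemma5p7:
  fixes X :: "'a set" and R :: "'a \<Rightarrow> 'a \<Rightarrow> bool" and f :: "real \<Rightarrow> 'a"
  assumes "finite X"
    and "p_morphism UNIV R_gt1 X R f"
    and "f ` UNIV = X"
  shows "small_anti_clique_overlaps X R"
  unfolding small_anti_clique_overlaps_def
proof (intro allI impI, elim conjE)
  fix \<Sigma>1 \<Sigma>2
  assume max: "max_anti_clique X R \<Sigma>1" "max_anti_clique X R \<Sigma>2" and "\<Sigma>1 \<noteq> \<Sigma>2"
  interpret R_gt1_pmorphism f
    using R_gt1_pmorphism_if_p_morphism[OF assms(2)] .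
  have "\<Sigma>1 \<subseteq> X"
    using max(1) by (simp add: max_anti_clique_def anti_clique_def)
  then have "finite (\<Sigma>1 \<inter> \<Sigma>2)"
    using rev_finite_subset[OF assms(1)] by blast
  show "card (\<Sigma>1 \<inter> \<Sigma>2) \<le> 1"
  proof (rule ccontr)
    assume "\<not> card (\<Sigma>1 \<inter> \<Sigma>2) \<le> 1"
    then obtain x z where "x \<in> \<Sigma>1 \<inter> \<Sigma>2" "z \<in> \<Sigma>1 \<inter> \<Sigma>2" "x \<noteq> z"
      using card_le_Suc0_iff_eq[OF \<open>finite (\<Sigma>1 \<inter> \<Sigma>2)\<close>] by auto
    then obtain a b where "saturated f {a..a + 1}" "saturated f {b..b + 1}" "a < b" "b < a + 1"
      using max_anti_cliques_saturated_windows[OF assms(2,3) max \<open>\<Sigma>1 \<noteq> \<Sigma>2\<close>] by blast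
    moreover have "finite (range f)"
      using assms(1,3) by simp
    ultimately show False
      using no_overlapping_saturated_windows by blast
  qed
qed

end
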